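(* Let $G$ be a graph with $n\ge 2$ vertices and average degree $d$. Then $G$ has a (possibly non-induced) subgraph with all degrees lying in the range $[d',6d']$, where $$d'=\frac{\left\lfloor (d/4-1)/\lceil \log n\rceil\right\rfloor+1}{6}.$$
   Context: Logarithms are base 2. *)

theory Defs
  imports Complex_Main
begin

definition simple_graph :: "'a set \<Rightarrow> 'a set set \<Rightarrow> bool" where
  "simple_graph V E \<longleftrightarrow> finite V \<and> (\<forall>e\<in>E. e \<subseteq> V \<and> card e = 2)"

definition degree :: "'a set set \<Rightarrow> 'a \<Rightarrow> nat" where
  "degree E v = card {e \<in> E. v \<in> e}"

definition avg_degree :: "'a set \<Rightarrow> 'a set set \<Rightarrow> real" where
  "avg_degree V E = 2 * real (card E) / real (card V)"

definition subgraph :: "'a set \<Rightarrow> 'a set set \<Rightarrow> 'a set \<Rightarrow> 'a set set \<Rightarrow> bool" where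
  "subgraph V' E' V E \<longleftrightarrow> V' \<subseteq> V \<and> E' \<subseteq> E \<and> (\<forall>e\<in>E'. e \<subseteq> V')"

end

theory Submission
  imports Defs
begin

text \<open>
  Choose a cut containing at least half of the edges and delete low-degree vertices from it:
  what remains is a bipartite graph with sides \<open>A\<close>, \<open>B\<close>, \<open>|A| \<le> |B|\<close>, in which every vertex
  has at least \<open>d/4\<close> neighbours on the other side; in particular \<open>|A| < 2^k\<close> with
  \<open>k = \<lceil>log n\<rceil>\<close>. Put \<open>D = 6d'\<close>, so that \<open>d/4 \<ge> k(D - 1) + 1\<close>.

  Pack stars with \<open>D\<close> leaves in \<open>A\<close> and centres in \<open>B\<close>, using every vertex of \<open>A\<close> at most
  \<open>D\<close> times, until no further star fits. If there are at least \<open>|A|/5\<close> stars, they form a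
  graph of maximum degree at most \<open>D\<close> with at least \<open>D/6\<close> edges per vertex. Otherwise fewer
  than \<open>|A|/5\<close> vertices of \<open>A\<close> are saturated, and every centre left over has fewer than \<open>D\<close>
  neighbours among the unsaturated ones, hence at least \<open>(k - 1)(D - 1) + 1\<close> among the
  saturated ones: we recurse on a side of less than half the size, which can happen at most
  \<open>k\<close> times. Deleting low-degree vertices from the star graph finally raises its minimum
  degree to \<open>D/6\<close> without increasing its maximum degree.
\<close>

lemma degree_mono:
  assumes "F \<subseteq> H" "finite H"
  shows "degree F v \<le> degree H v"
  unfolding degree_def using assms by (intro card_mono) auto

lemma degree_le_card_neighbours:
  assumes "finite U" "\<forall>e\<in>F. card e = 2" "\<forall>e\<in>F. v \<in> e \<longrightarrow> e - {v} \<subseteq> U"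
  shows "degree F v \<le> card {u\<in>U. {u, v} \<in> F}"
proof -
  have "{e\<in>F. v \<in> e} \<subseteq> (\<lambda>u. {u, v}) ` {u\<in>U. {u, v} \<in> F}"
  proof
    fix e assume e: "e \<in> {e\<in>F. v \<in> e}"
    then have "card (e - {v}) = 1"
      using assms(2) by (simp add: card_gt_0_iff)
    then obtain u where "e - {v} = {u}"
      by (rule card_1_singletonE)
    then have "e = {u, v}" "u \<in> U"
      using e assms(3) by blast+
    then show "e \<in> (\<lambda>u. {u, v}) ` {u\<in>U. {u, v} \<in> F}"
      using e by blast
  qed
  then have "degree F v \<le> card ((\<lambda>u. {u, v}) ` {u\<in>U. {u, v} \<in> F})"
    unfolding degree_def using assms(1) by (intro card_mono) auto
  also have "\<dots> \<le> card {u\<in>U. {u, v} \<in> F}"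
    by (rule card_image_le) (use assms(1) in simp)
  finally show ?thesis .
qed

lemma exists_subgraph_min_degree:
  fixes c :: real
  assumes "finite V" "\<forall>e\<in>E. e \<subseteq> V \<and> e \<noteq> {}" "E \<noteq> {}" "c * card V \<le> card E"
  shows "\<exists>W\<subseteq>V. W \<noteq> {} \<and> (\<forall>v\<in>W. c \<le> degree {e\<in>E. e \<subseteq> W} v)"
  using assms
proof (induction V arbitrary: E rule: finite_psubset_induct)
  case (psubset V)
  show ?case
  proof (cases "\<forall>v\<in>V. c \<le> degree {e\<in>E. e \<subseteq> V} v")
    case True
    then show ?thesis
      using psubset.prems(1,2) by blast
  next
    case False
    moreover have "{e\<in>E. e \<subseteq> V} = E"
      using psubset.prems(1) by auto
    ultimately obtain v where v: "v \<in> V" "degree E v < c"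
      by (auto simp: not_le)
    define E' where "E' = {e\<in>E. v \<notin> e}"
    have "finite E"
      using psubset.hyps psubset.prems(1) by (intro finite_subset[of E "Pow V"]) auto
    then have "card E = degree E v + card E'"
      unfolding degree_def E'_def using card_Int_Diff[of E "{e. v \<in> e}"]
      by (simp add: Int_def set_diff_eq)
    moreover have "card (V - {v}) = card V - 1" and "card V \<ge> 1"
      using v(1) psubset.hyps by (auto simp: Suc_le_eq card_gt_0_iff)
    \<comment> \<open>removing a vertex of degree below \<open>c\<close> keeps the density \<open>|E| / |V| \<ge> c\<close>\<close>
    ultimately have less: "c * card (V - {v}) < card E'"
      using psubset.prems(3) v(2) by (simp add: of_nat_diff algebra_simps)
    moreover have "0 \<le> c * card (V - {v})"
      using v(2) of_nat_0_le_iff[of "degree E v"] by (intro mult_nonneg_nonneg) linarith+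
    ultimately have "E' \<noteq> {}"
      by auto
    moreover have "\<forall>e\<in>E'. e \<subseteq> V - {v} \<and> e \<noteq> {}"
      using psubset.prems(1) unfolding E'_def by auto
    moreover have "V - {v} \<subset> V"
      using v(1) by blast
    ultimately have "\<exists>W\<subseteq>V - {v}. W \<noteq> {} \<and> (\<forall>u\<in>W. c \<le> degree {e\<in>E'. e \<subseteq> W} u)"
      using psubset.IH[of "V - {v}" E'] less_imp_le[OF less] by simp
    then obtain W where W: "W \<subseteq> V - {v}" "W \<noteq> {}" "\<forall>u\<in>W. c \<le> degree {e\<in>E'. e \<subseteq> W} u"
      by blast
    have "{e\<in>E'. e \<subseteq> W} = {e\<in>E. e \<subseteq> W}"
      using W(1) unfolding E'_def by auto
    then show ?thesis
      using W by (metis Diff_subset subset_trans)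
  qed
qed

definition crosses :: "'a set \<Rightarrow> 'a set \<Rightarrow> bool" where
  "crosses P e \<longleftrightarrow> e \<inter> P \<noteq> {} \<and> e - P \<noteq> {}"

lemma crosses_insert_iff:
  assumes "v \<notin> P" "v \<in> e" "card e = 2"
  shows "crosses (insert v P) e \<longleftrightarrow> \<not> crosses P e"
proof -
  obtain u where "e = {v, u}" "u \<noteq> v"
    using assms(2,3) by (auto simp: card_2_iff)
  then show ?thesis
    using assms(1) by (auto simp: crosses_def)
qed

lemma crosses_insert_iff_notin: "v \<notin> e \<Longrightarrow> crosses (insert v P) e \<longleftrightarrow> crosses P e"
  by (auto simp: crosses_def)

lemma card_crossing_insert:
  assumes "finite E" "\<forall>e\<in>E. card e = 2" "v \<notin> P"
  shows "card {e\<in>E. crosses P e} + card {e\<in>E. crosses (insert v P) e}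
    = card (E \<inter> {e. v \<in> e}) + 2 * card ({e\<in>E. crosses P e} - {e. v \<in> e})"
proof -
  define S where "S = {e. v \<in> e}"
  define X where "X = {e\<in>E. crosses P e}"
  define Y where "Y = {e\<in>E. crosses (insert v P) e}"
  have "finite X" "finite Y" "finite (E \<inter> S)"
    using \<open>finite E\<close> unfolding X_def Y_def by auto
  have "Y - S = X - S"
    unfolding X_def Y_def S_def by (auto simp: crosses_insert_iff_notin)
  moreover have "Y \<inter> S = (E \<inter> S) - X"
    unfolding X_def Y_def S_def using assms(2,3) by (auto simp: crosses_insert_iff)
  ultimately have Y: "card Y = card ((E \<inter> S) - X) + card (X - S)"
    using card_Int_Diff[OF \<open>finite Y\<close>, of S] by (simp only:)
  have "(E \<inter> S) \<inter> X = X \<inter> S"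
    unfolding X_def by auto
  then have ES: "card (E \<inter> S) = card (X \<inter> S) + card ((E \<inter> S) - X)"
    using card_Int_Diff[OF \<open>finite (E \<inter> S)\<close>, of X] by (simp only:)
  have "card X = card (X \<inter> S) + card (X - S)"
    using \<open>finite X\<close> by (rule card_Int_Diff)
  with Y ES have "card X + card Y = card (E \<inter> S) + 2 * card (X - S)"
    by linarith
  then show ?thesis
    unfolding S_def X_def Y_def .
qed

lemma exists_cut_half_edges:
  assumes "finite V" "\<forall>e\<in>E. e \<subseteq> V \<and> card e = 2"
  shows "\<exists>P\<subseteq>V. card E \<le> 2 * card {e\<in>E. crosses P e}"
  using assms
proof (induction V arbitrary: E rule: finite_induct)
  case empty
  then have "E = {}"
    by fastforce
  then show ?case
    by simp
next
  case (insert v V)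
  define S where "S = {e. v \<in> e}"
  have "finite E"
    using insert.hyps insert.prems by (intro finite_subset[of E "Pow (insert v V)"]) auto
  have "\<forall>e\<in>E - S. e \<subseteq> V \<and> card e = 2"
    using insert.prems unfolding S_def by auto
  then obtain P where P: "P \<subseteq> V" "card (E - S) \<le> 2 * card {e\<in>E - S. crosses P e}"
    using insert.IH[of "E - S"] by blast
  have "v \<notin> P"
    using P(1) insert.hyps by auto
  have "{e\<in>E - S. crosses P e} = {e\<in>E. crosses P e} - S"
    by auto
  then have "card E \<le> card (E \<inter> S) + 2 * card ({e\<in>E. crosses P e} - S)"
    using P(2) card_Int_Diff[OF \<open>finite E\<close>, of S] by simp
  also have "\<dots> = card {e\<in>E. crosses P e} + card {e\<in>E. crosses (insert v P) e}"
    unfolding S_def using \<open>finite E\<close> insert.prems \<open>v \<notin> P\<close> by (simp add: card_crossing_insert)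
  finally have "card E \<le> 2 * card {e\<in>E. crosses P e} \<or> card E \<le> 2 * card {e\<in>E. crosses (insert v P) e}"
    by linarith
  then show ?case
    using P(1) by (meson insert_mono subset_insertI2)
qed

lemma degree_crossing_le_card_other_side:
  assumes "finite W" "\<forall>e\<in>E. card e = 2"
  shows "degree {e\<in>E. crosses P e \<and> e \<subseteq> W} v \<le> card {u\<in>W. (u \<in> P \<longleftrightarrow> v \<notin> P) \<and> {u, v} \<in> E}"
proof -
  define U where "U = {u\<in>W. u \<in> P \<longleftrightarrow> v \<notin> P}"
  define F where "F = {e\<in>E. crosses P e \<and> e \<subseteq> W}"
  have "finite U"
    using assms(1) unfolding U_def by simp
  moreover have "\<forall>e\<in>F. card e = 2"
    using assms(2) unfolding F_def by simp
  moreover have "\<forall>e\<in>F. v \<in> e \<longrightarrow> e - {v} \<subseteq> U"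
  proof (intro ballI impI)
    fix e assume e: "e \<in> F" "v \<in> e"
    then have "card e = 2" "crosses P e" "e \<subseteq> W"
      using assms(2) unfolding F_def by auto
    with e(2) obtain u where "e = {u, v}"
      by (metis card_2_iff insert_commute insertE singletonD)
    then show "e - {v} \<subseteq> U"
      using \<open>crosses P e\<close> \<open>e \<subseteq> W\<close> unfolding crosses_def U_def by auto
  qed
  ultimately have "degree F v \<le> card {u\<in>U. {u, v} \<in> F}"
    by (rule degree_le_card_neighbours)
  also have "\<dots> \<le> card {u\<in>W. (u \<in> P \<longleftrightarrow> v \<notin> P) \<and> {u, v} \<in> E}"
    using assms(1) unfolding U_def F_def by (intro card_mono) auto
  finally show ?thesis
    unfolding F_def .
qed

lemma exists_smaller_side_min_degree:
  fixes c :: real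
  assumes "finite W" "W \<noteq> {}" "\<forall>v\<in>W. c \<le> card {u\<in>W. (u \<in> P \<longleftrightarrow> v \<notin> P) \<and> {u, v} \<in> E}"
  shows "\<exists>A B. A \<union> B = W \<and> A \<inter> B = {} \<and> B \<noteq> {} \<and> card A \<le> card B \<and>
    (\<forall>b\<in>B. c \<le> card {a\<in>A. {a, b} \<in> E})"
proof -
  obtain B where B: "B = W \<inter> P \<or> B = W - P" "card (W - B) \<le> card B"
  proof (cases "card (W \<inter> P) \<le> card (W - P)")
    case True
    then show thesis
      using that[of "W - P"] by (simp add: Diff_Diff_Int)
  next
    case False
    then show thesis
      using that[of "W \<inter> P"] by (simp add: Diff_Int)
  qed
  have "B \<noteq> {}"
  proof
    assume "B = {}"
    then have "card W = 0"
      using B(2) by simp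
    then show False
      using assms(1,2) by simp
  qed
  moreover have "\<forall>b\<in>B. c \<le> card {a\<in>W - B. {a, b} \<in> E}"
  proof
    fix b assume "b \<in> B"
    then have "c \<le> card {u\<in>W. (u \<in> P \<longleftrightarrow> b \<notin> P) \<and> {u, b} \<in> E}"
      using assms(3) B(1) by blast
    moreover have "{u\<in>W. (u \<in> P \<longleftrightarrow> b \<notin> P) \<and> {u, b} \<in> E} = {a\<in>W - B. {a, b} \<in> E}"
      using B(1) \<open>b \<in> B\<close> by auto
    ultimately show "c \<le> card {a\<in>W - B. {a, b} \<in> E}"
      by simp
  qed
  moreover have "(W - B) \<union> B = W" "(W - B) \<inter> B = {}"
    using B(1) by blast+
  ultimately show ?thesis
    using B(2) by blast
qed

lemma exists_cut_subgraph_min_degree: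
  fixes c :: real
  assumes G: "simple_graph V E" and "0 < c" "4 * c \<le> avg_degree V E"
  shows "\<exists>P W. W \<subseteq> V \<and> W \<noteq> {} \<and> (\<forall>v\<in>W. c \<le> degree {e\<in>E. crosses P e \<and> e \<subseteq> W} v)"
proof -
  have "finite V" and edges: "\<forall>e\<in>E. e \<subseteq> V \<and> card e = 2"
    using G unfolding simple_graph_def by auto
  obtain P where cut: "card E \<le> 2 * card {e\<in>E. crosses P e}"
    using exists_cut_half_edges[OF \<open>finite V\<close> edges] by blast
  define X where "X = {e\<in>E. crosses P e}"
  have "card V \<noteq> 0"
    using assms(2,3) unfolding avg_degree_def by (cases "card V = 0") auto
  then have "c * card V \<le> card E / 2"
    using assms(3) by (simp add: avg_degree_def field_simps)
  also have "\<dots> \<le> card X"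
    using cut unfolding X_def by simp
  finally have dense: "c * card V \<le> card X" .
  moreover have "0 < c * card V"
    using \<open>0 < c\<close> \<open>card V \<noteq> 0\<close> by simp
  ultimately have "X \<noteq> {}"
    by auto
  moreover have "\<forall>e\<in>X. e \<subseteq> V \<and> e \<noteq> {}"
    using edges unfolding X_def by fastforce
  ultimately have "\<exists>W\<subseteq>V. W \<noteq> {} \<and> (\<forall>v\<in>W. c \<le> degree {e\<in>X. e \<subseteq> W} v)"
    using \<open>finite V\<close> dense by (intro exists_subgraph_min_degree)
  moreover have "{e\<in>X. e \<subseteq> W} = {e\<in>E. crosses P e \<and> e \<subseteq> W}" for W
    unfolding X_def by auto
  ultimately have "\<exists>W\<subseteq>V. W \<noteq> {} \<and> (\<forall>v\<in>W. c \<le> degree {e\<in>E. crosses P e \<and> e \<subseteq> W} v)"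
    by simp
  then show ?thesis
    by blast
qed

lemma exists_bipartite_subgraph_min_degree:
  fixes c :: real
  assumes G: "simple_graph V E" and "0 < c" "4 * c \<le> avg_degree V E"
  shows "\<exists>A B. A \<union> B \<subseteq> V \<and> A \<inter> B = {} \<and> B \<noteq> {} \<and> card A \<le> card B \<and>
    (\<forall>b\<in>B. c \<le> card {a\<in>A. {a, b} \<in> E})"
proof -
  obtain P W where "W \<subseteq> V" "W \<noteq> {}" and W: "\<forall>v\<in>W. c \<le> degree {e\<in>E. crosses P e \<and> e \<subseteq> W} v"
    using exists_cut_subgraph_min_degree[OF assms] by blast
  have "finite W" "\<forall>e\<in>E. card e = 2"
    using G \<open>W \<subseteq> V\<close> finite_subset unfolding simple_graph_def by auto
  have "\<forall>v\<in>W. c \<le> card {u\<in>W. (u \<in> P \<longleftrightarrow> v \<notin> P) \<and> {u, v} \<in> E}"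
  proof
    fix v assume "v \<in> W"
    then have "c \<le> degree {e\<in>E. crosses P e \<and> e \<subseteq> W} v"
      using W by blast
    also have "\<dots> \<le> card {u\<in>W. (u \<in> P \<longleftrightarrow> v \<notin> P) \<and> {u, v} \<in> E}"
      unfolding of_nat_le_iff using \<open>finite W\<close> \<open>\<forall>e\<in>E. card e = 2\<close>
      by (rule degree_crossing_le_card_other_side)
    finally show "c \<le> card {u\<in>W. (u \<in> P \<longleftrightarrow> v \<notin> P) \<and> {u, v} \<in> E}" .
  qed
  from exists_smaller_side_min_degree[OF \<open>finite W\<close> \<open>W \<noteq> {}\<close> this]
  obtain A B where AB: "A \<union> B = W" "A \<inter> B = {}" "B \<noteq> {}" "card A \<le> card B"
    "\<forall>b\<in>B. c \<le> card {a\<in>A. {a, b} \<in> E}"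
    by blast
  moreover have "A \<union> B \<subseteq> V"
    using AB(1) \<open>W \<subseteq> V\<close> by simp
  ultimately show ?thesis
    by blast
qed

definition star_packing :: "'a set set \<Rightarrow> 'a set \<Rightarrow> 'a set \<Rightarrow> nat \<Rightarrow> 'a set set \<Rightarrow> bool" where
  "star_packing E A B D H \<longleftrightarrow> H \<subseteq> E \<and> (\<forall>e\<in>H. \<exists>a\<in>A. \<exists>b\<in>B. e = {a, b}) \<and>
     (\<forall>b\<in>B. degree H b = 0 \<or> degree H b = D) \<and> (\<forall>a\<in>A. degree H a \<le> D)"

lemma star_packingD:
  assumes "star_packing E A B D H"
  shows "H \<subseteq> E" "e \<in> H \<Longrightarrow> \<exists>a\<in>A. \<exists>b\<in>B. e = {a, b}"
    "b \<in> B \<Longrightarrow> degree H b = 0 \<or> degree H b = D" "a \<in> A \<Longrightarrow> degree H a \<le> D"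
  using assms unfolding star_packing_def by auto

lemma star_packing_subset_image:
  assumes "star_packing E A B D H"
  shows "H \<subseteq> (\<lambda>(a, b). {a, b}) ` (A \<times> B)"
  using star_packingD(2)[OF assms] by fast

lemma star_packing_finite:
  assumes "star_packing E A B D H" "finite A" "finite B"
  shows "finite H"
  using finite_subset[OF star_packing_subset_image[OF assms(1)]] assms(2,3) by simp

lemma sum_degree_eq_card:
  assumes "finite B" "finite H" "\<forall>e\<in>H. card (B \<inter> e) = 1"
  shows "(\<Sum>b\<in>B. degree H b) = card H"
  unfolding degree_def using sum_multicount[OF assms(1,2), of "\<lambda>b e. b \<in> e" 1] assms(3)
  by (simp add: Int_def)

lemma star_packing_card_eq_sum_degree:
  assumes "star_packing E A B D H" "finite A" "finite B" "A \<inter> B = {}"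
  shows "card H = (\<Sum>a\<in>A. degree H a)" "card H = (\<Sum>b\<in>B. degree H b)"
proof -
  have "finite H"
    using assms(1-3) by (rule star_packing_finite)
  moreover have "\<forall>e\<in>H. card (A \<inter> e) = 1 \<and> card (B \<inter> e) = 1"
    using star_packingD(2)[OF assms(1)] assms(4) by (fastforce simp: Int_insert_right)
  ultimately show "card H = (\<Sum>a\<in>A. degree H a)" "card H = (\<Sum>b\<in>B. degree H b)"
    using sum_degree_eq_card assms(2,3) by metis+
qed

lemma star_packing_card_eq:
  assumes "star_packing E A B D H" "finite A" "finite B" "A \<inter> B = {}"
  shows "card H = D * card {b\<in>B. degree H b = D}"
proof -
  have "card H = (\<Sum>b\<in>B. degree H b)"
    using assms by (rule star_packing_card_eq_sum_degree)
  also have "\<dots> = (\<Sum>b\<in>B. if degree H b = D then D else 0)"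
    using star_packingD(3)[OF assms(1)] by (intro sum.cong) auto
  also have "\<dots> = D * card {b\<in>B. degree H b = D}"
    using assms(3) by (simp add: sum.inter_filter[symmetric])
  finally show ?thesis .
qed

lemma star_packing_card_ge:
  assumes "star_packing E A B D H" "finite A" "finite B" "A \<inter> B = {}"
  shows "D * card {a\<in>A. degree H a = D} \<le> card H"
proof -
  have "D * card {a\<in>A. degree H a = D} = (\<Sum>a\<in>{a\<in>A. degree H a = D}. degree H a)"
    by simp
  also have "\<dots> \<le> (\<Sum>a\<in>A. degree H a)"
    using assms(2) by (intro sum_mono2) auto
  also have "\<dots> = card H"
    using star_packing_card_eq_sum_degree(1)[OF assms] by simp
  finally show ?thesis .
qed

lemma star_packing_card_saturated_le:
  assumes "star_packing E A B D H" "finite A" "finite B" "A \<inter> B = {}" "0 < D"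
  shows "card {a\<in>A. degree H a = D} \<le> card {b\<in>B. degree H b = D}"
  using star_packing_card_ge[OF assms(1-4)] star_packing_card_eq[OF assms(1-4)] assms(5) by simp

lemma star_packing_degree_le:
  assumes "star_packing E A B D H"
  shows "degree H v \<le> D"
proof (cases "v \<in> A \<union> B")
  case True
  then show ?thesis
    using star_packingD(3,4)[OF assms] by fastforce
next
  case False
  then have "{e\<in>H. v \<in> e} = {}"
    using star_packingD(2)[OF assms] by fastforce
  then show ?thesis
    unfolding degree_def by (metis card.empty zero_le)
qed

lemma star_packing_Union_subset:
  assumes "star_packing E A B D H" "finite H"
  shows "\<Union>H \<subseteq> A \<union> {b\<in>B. degree H b = D}"
proof
  fix v assume "v \<in> \<Union>H"
  then obtain e where e: "e \<in> H" "v \<in> e"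
    by blast
  then obtain a b where ab: "e = {a, b}" "a \<in> A" "b \<in> B"
    using star_packingD(2)[OF assms(1)] by blast
  have "{e\<in>H. b \<in> e} \<noteq> {}"
    using e(1) ab(1) by blast
  then have "degree H b \<noteq> 0"
    unfolding degree_def using assms(2) by simp
  then have "degree H b = D"
    using star_packingD(3)[OF assms(1) ab(3)] by simp
  then show "v \<in> A \<union> {b\<in>B. degree H b = D}"
    using e(2) ab by blast
qed

lemma degree_Un_star:
  assumes "finite H" "finite T" "degree H b = 0"
  shows "degree (H \<union> (\<lambda>a. {a, b}) ` T) v = degree H v + card {a\<in>T. v = a \<or> v = b}"
proof -
  have "{e\<in>H. b \<in> e} = {}"
    using assms(1,3) by (simp add: degree_def)
  then have disj: "{e\<in>H. v \<in> e} \<inter> (\<lambda>a. {a, b}) ` {a\<in>T. v = a \<or> v = b} = {}"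
    by blast
  have "{e\<in>H \<union> (\<lambda>a. {a, b}) ` T. v \<in> e} = {e\<in>H. v \<in> e} \<union> (\<lambda>a. {a, b}) ` {a\<in>T. v = a \<or> v = b}"
    by auto
  moreover have "card ((\<lambda>a. {a, b}) ` {a\<in>T. v = a \<or> v = b}) = card {a\<in>T. v = a \<or> v = b}"
    by (rule card_image) (auto simp: inj_on_def doubleton_eq_iff)
  ultimately show ?thesis
    unfolding degree_def using assms(1,2) disj by (simp add: card_Un_disjoint)
qed

lemma card_Un_star:
  assumes "finite H" "finite T" "degree H b = 0"
  shows "card (H \<union> (\<lambda>a. {a, b}) ` T) = card H + card T"
proof -
  have "{e\<in>H. b \<in> e} = {}"
    using assms(1,3) by (simp add: degree_def)
  then have "H \<inter> (\<lambda>a. {a, b}) ` T = {}"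
    by blast
  moreover have "card ((\<lambda>a. {a, b}) ` T) = card T"
    by (rule card_image) (auto simp: inj_on_def doubleton_eq_iff)
  ultimately show ?thesis
    using assms(1,2) by (simp add: card_Un_disjoint)
qed

lemma star_packing_add_star:
  assumes H: "star_packing E A B D H" and "finite A" "finite B" "A \<inter> B = {}"
    and b: "b \<in> B" "degree H b = 0"
    and T: "T \<subseteq> {a\<in>A. {a, b} \<in> E \<and> degree H a < D}" "card T = D"
  shows "star_packing E A B D (H \<union> (\<lambda>a. {a, b}) ` T)"
proof -
  have "finite H"
    using H \<open>finite A\<close> \<open>finite B\<close> by (rule star_packing_finite)
  have "finite T"
    using finite_subset[OF T(1)] \<open>finite A\<close> by simp
  note deg = degree_Un_star[OF \<open>finite H\<close> \<open>finite T\<close> b(2)]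
  show ?thesis
    unfolding star_packing_def
  proof (intro conjI ballI)
    show "H \<union> (\<lambda>a. {a, b}) ` T \<subseteq> E"
      using star_packingD(1)[OF H] T(1) by auto
  next
    fix e assume "e \<in> H \<union> (\<lambda>a. {a, b}) ` T"
    then show "\<exists>a\<in>A. \<exists>b\<in>B. e = {a, b}"
      using star_packingD(2)[OF H] T(1) b(1) by blast
  next
    fix b' assume "b' \<in> B"
    show "degree (H \<union> (\<lambda>a. {a, b}) ` T) b' = 0 \<or> degree (H \<union> (\<lambda>a. {a, b}) ` T) b' = D"
    proof (cases "b' = b")
      case True
      then show ?thesis
        using deg b(2) T(2) by simp
    next
      case False
      then have no_leaf: "{a\<in>T. b' = a \<or> b' = b} = {}"
        using \<open>b' \<in> B\<close> T(1) \<open>A \<inter> B = {}\<close> by blast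
      show ?thesis
        using star_packingD(3)[OF H \<open>b' \<in> B\<close>] by (simp add: deg no_leaf)
    qed
  next
    fix a assume "a \<in> A"
    then have "{a'\<in>T. a = a' \<or> a = b} = (if a \<in> T then {a} else {})"
      using b(1) \<open>A \<inter> B = {}\<close> by auto
    then show "degree (H \<union> (\<lambda>a. {a, b}) ` T) a \<le> D"
      using deg star_packingD(4)[OF H \<open>a \<in> A\<close>] T(1) by (auto simp: Suc_le_eq)
  qed
qed

lemma exists_saturated_star_packing:
  assumes "finite A" "finite B" "A \<inter> B = {}" "0 < D"
  obtains H where "star_packing E A B D H"
    and "\<And>b. b \<in> B \<Longrightarrow> degree H b = 0 \<Longrightarrow> card {a\<in>A. {a, b} \<in> E \<and> degree H a < D} < D"
proof -
  have "star_packing E A B D {}"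
    by (simp add: star_packing_def degree_def)
  moreover have "\<forall>H. star_packing E A B D H \<longrightarrow> card H < card ((\<lambda>(a, b). {a, b}) ` (A \<times> B)) + 1"
    using star_packing_subset_image card_mono assms(1,2)
    by (metis finite_SigmaI finite_imageI less_Suc_eq_le Suc_eq_plus1)
  ultimately obtain H where H: "star_packing E A B D H"
    and max: "\<forall>H'. star_packing E A B D H' \<longrightarrow> card H' \<le> card H"
    using ex_has_greatest_nat[of "star_packing E A B D" "{}" card] by blast
  show thesis
  proof (rule that[OF H])
    fix b assume b: "b \<in> B" "degree H b = 0"
    show "card {a\<in>A. {a, b} \<in> E \<and> degree H a < D} < D"
    proof (rule ccontr)
      assume "\<not> ?thesis"
      then obtain T where T: "T \<subseteq> {a\<in>A. {a, b} \<in> E \<and> degree H a < D}" "card T = D"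
        by (meson not_less obtain_subset_with_card_n)
      moreover have "finite H" "finite T"
        using star_packing_finite[OF H assms(1,2)] finite_subset[OF T(1)] assms(1) by auto
      ultimately have "star_packing E A B D (H \<union> (\<lambda>a. {a, b}) ` T)"
        and "card (H \<union> (\<lambda>a. {a, b}) ` T) = card H + D"
        using star_packing_add_star[OF H assms(1-3) b] card_Un_star[OF _ _ b(2)] by auto
      then show False
        using max assms(4) by fastforce
    qed
  qed
qed

lemma star_packing_dense:
  assumes H: "star_packing E A B D H" and fin: "finite A" "finite B" and "A \<inter> B = {}" "0 < D" "A \<noteq> {}"
    and many: "card A \<le> 5 * card {b\<in>B. degree H b = D}"
  shows "H \<noteq> {}" "\<Union>H \<subseteq> A \<union> B" "D * card (\<Union>H) \<le> 6 * card H"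
proof -
  define B' where "B' = {b\<in>B. degree H b = D}"
  have "finite H"
    using H fin by (rule star_packing_finite)
  have card_H: "card H = D * card B'"
    unfolding B'_def using H fin \<open>A \<inter> B = {}\<close> by (rule star_packing_card_eq)
  have "\<Union>H \<subseteq> A \<union> B'"
    unfolding B'_def using H \<open>finite H\<close> by (rule star_packing_Union_subset)
  then show "\<Union>H \<subseteq> A \<union> B"
    unfolding B'_def by blast
  have "card (\<Union>H) \<le> card (A \<union> B')"
    using fin \<open>\<Union>H \<subseteq> A \<union> B'\<close> unfolding B'_def by (intro card_mono) auto
  also have "\<dots> \<le> card A + card B'"
    by (rule card_Un_le)
  finally have "card (\<Union>H) \<le> 6 * card B'"
    using many unfolding B'_def by linarith
  then show "D * card (\<Union>H) \<le> 6 * card H"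
    using card_H by simp
  have "card A \<noteq> 0"
    using fin(1) \<open>A \<noteq> {}\<close> by simp
  then show "H \<noteq> {}"
    using many card_H \<open>0 < D\<close> unfolding B'_def by auto
qed

lemma star_packing_saturated_neighbours:
  assumes "star_packing E A B D H" "finite A"
    and "card {a\<in>A. {a, b} \<in> E \<and> degree H a < D} < D"
    and "Suc j * (D - 1) + 1 \<le> card {a\<in>A. {a, b} \<in> E}"
  shows "j * (D - 1) + 1 \<le> card {a\<in>{a\<in>A. degree H a = D}. {a, b} \<in> E}"
proof -
  have "{a\<in>A. {a, b} \<in> E}
      \<subseteq> {a\<in>{a\<in>A. degree H a = D}. {a, b} \<in> E} \<union> {a\<in>A. {a, b} \<in> E \<and> degree H a < D}"
    using star_packingD(4)[OF assms(1)] by fastforce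
  then have "card {a\<in>A. {a, b} \<in> E}
      \<le> card ({a\<in>{a\<in>A. degree H a = D}. {a, b} \<in> E} \<union> {a\<in>A. {a, b} \<in> E \<and> degree H a < D})"
    using assms(2) by (intro card_mono) auto
  also have "\<dots> \<le> card {a\<in>{a\<in>A. degree H a = D}. {a, b} \<in> E} + card {a\<in>A. {a, b} \<in> E \<and> degree H a < D}"
    by (rule card_Un_le)
  finally show ?thesis
    using assms(3,4) by simp
qed

lemma bipartite_exists_bounded_degree_dense_subgraph:
  assumes "finite A" "finite B" "A \<inter> B = {}" "B \<noteq> {}" "card A \<le> card B" "card A < 2 ^ j" "0 < D"
    and "\<forall>b\<in>B. j * (D - 1) + 1 \<le> card {a\<in>A. {a, b} \<in> E}"
  shows "\<exists>H\<subseteq>E. H \<noteq> {} \<and> \<Union>H \<subseteq> A \<union> B \<and> (\<forall>v. degree H v \<le> D) \<and> D * card (\<Union>H) \<le> 6 * card H"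
  using assms
proof (induction j arbitrary: A B)
  case 0
  then obtain b where "b \<in> B" "A = {}"
    by auto
  then show ?case
    using "0.prems"(8) by auto
next
  case (Suc j)
  note fin = Suc.prems(1,2) and disj = Suc.prems(3) and D = Suc.prems(7)
  obtain H where H: "star_packing E A B D H"
    and sat: "\<And>b. b \<in> B \<Longrightarrow> degree H b = 0 \<Longrightarrow> card {a\<in>A. {a, b} \<in> E \<and> degree H a < D} < D"
    using exists_saturated_star_packing[OF fin disj D] by blast
  define B' where "B' = {b\<in>B. degree H b = D}"
  define S where "S = {a\<in>A. degree H a = D}"
  have "card S \<le> card B'"
    unfolding S_def B'_def using H fin disj D by (rule star_packing_card_saturated_le)
  have "A \<noteq> {}"
    using Suc.prems(4,8) by force
  show ?case
  proof (cases "card A \<le> 5 * card B'")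
    case True
    then show ?thesis
      using star_packing_dense[OF H fin disj D \<open>A \<noteq> {}\<close>] star_packingD(1)[OF H]
        star_packing_degree_le[OF H] unfolding B'_def by blast
  next
    case False
    define B2 where "B2 = B - B'"
    have "card B2 = card B - card B'"
      unfolding B2_def B'_def using fin(2) by (intro card_Diff_subset) auto
    then have sizes: "B2 \<noteq> {}" "card S \<le> card B2" "card S < 2 ^ j"
      using False \<open>card S \<le> card B'\<close> Suc.prems(5,6) by auto
    have parts: "finite S" "finite B2" "S \<inter> B2 = {}"
      using fin disj unfolding S_def B2_def by auto
    have "\<forall>b\<in>B2. j * (D - 1) + 1 \<le> card {a\<in>S. {a, b} \<in> E}"
    proof
      fix b assume "b \<in> B2"
      then have "card {a\<in>A. {a, b} \<in> E \<and> degree H a < D} < D"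
        using sat star_packingD(3)[OF H] unfolding B2_def B'_def by blast
      moreover have "Suc j * (D - 1) + 1 \<le> card {a\<in>A. {a, b} \<in> E}"
        using Suc.prems(8) \<open>b \<in> B2\<close> unfolding B2_def by blast
      ultimately show "j * (D - 1) + 1 \<le> card {a\<in>S. {a, b} \<in> E}"
        unfolding S_def using H fin(1) by (intro star_packing_saturated_neighbours)
    qed
    then obtain H' where H': "H' \<subseteq> E" "H' \<noteq> {}" "\<Union>H' \<subseteq> S \<union> B2" "\<forall>v. degree H' v \<le> D"
      "D * card (\<Union>H') \<le> 6 * card H'"
      using Suc.IH[OF parts sizes D] by blast
    moreover have "\<Union>H' \<subseteq> A \<union> B"
      using H'(3) unfolding S_def B2_def by blast
    ultimately show ?thesis
      by blast
  qed
qed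

lemma exists_induced_subgraph_degrees_between:
  assumes "finite (\<Union>H)" "\<forall>e\<in>H. e \<noteq> {}" "H \<noteq> {}" "\<forall>v. degree H v \<le> D"
    and "D * card (\<Union>H) \<le> 6 * card H"
  shows "\<exists>W\<subseteq>\<Union>H. W \<noteq> {} \<and>
    (\<forall>v\<in>W. real D / 6 \<le> degree {e\<in>H. e \<subseteq> W} v \<and> degree {e\<in>H. e \<subseteq> W} v \<le> D)"
proof -
  have "finite H"
    using assms(1) by (rule finite_UnionD)
  have "\<forall>e\<in>H. e \<subseteq> \<Union>H \<and> e \<noteq> {}"
    using assms(2) by blast
  moreover have "real D / 6 * card (\<Union>H) \<le> card H"
    using assms(5) by (simp add: field_simps flip: of_nat_mult)
  ultimately have "\<exists>W\<subseteq>\<Union>H. W \<noteq> {} \<and> (\<forall>v\<in>W. real D / 6 \<le> degree {e\<in>H. e \<subseteq> W} v)"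
    using assms(1,3) by (intro exists_subgraph_min_degree)
  then obtain W where W: "W \<subseteq> \<Union>H" "W \<noteq> {}" "\<forall>v\<in>W. real D / 6 \<le> degree {e\<in>H. e \<subseteq> W} v"
    by blast
  moreover have "degree {e\<in>H. e \<subseteq> W} v \<le> D" for v
    by (rule order_trans[OF degree_mono[OF _ \<open>finite H\<close>]]) (use assms(4) in auto)
  ultimately show ?thesis
    by blast
qed

lemma exists_subgraph_degrees_between:
  assumes G: "simple_graph V E" and "card V \<le> 2 ^ k" "0 < D"
    and "real k * (real D - 1) + 1 \<le> avg_degree V E / 4"
  shows "\<exists>V' E'. V' \<noteq> {} \<and> subgraph V' E' V E \<and> (\<forall>v\<in>V'. real D / 6 \<le> degree E' v \<and> degree E' v \<le> D)"
proof -
  have "finite V" and edges: "\<forall>e\<in>E. e \<subseteq> V \<and> card e = 2"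
    using G unfolding simple_graph_def by auto
  have pos: "0 < real (k * (D - 1) + 1)"
    by (simp only: of_nat_0_less_iff)
  have le: "4 * real (k * (D - 1) + 1) \<le> avg_degree V E"
    using assms(3,4) by (simp add: of_nat_diff field_simps)
  obtain A B where AB: "A \<union> B \<subseteq> V" "A \<inter> B = {}" "B \<noteq> {}" "card A \<le> card B"
    and nbrs: "\<forall>b\<in>B. real (k * (D - 1) + 1) \<le> card {a\<in>A. {a, b} \<in> E}"
    using exists_bipartite_subgraph_min_degree[OF G pos le] by blast
  have "finite A" "finite B"
    using AB(1) \<open>finite V\<close> by (auto dest: finite_subset)
  have "card A + card B \<le> card V"
    using AB(1,2) \<open>finite V\<close> \<open>finite A\<close> \<open>finite B\<close> by (metis card_Un_disjoint card_mono)
  then have "card A < 2 ^ k"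
    using AB(4) assms(2) zero_less_power[of "2::nat" k] by linarith
  moreover have "\<forall>b\<in>B. k * (D - 1) + 1 \<le> card {a\<in>A. {a, b} \<in> E}"
    using nbrs by (simp only: of_nat_le_iff)
  ultimately have "\<exists>H\<subseteq>E. H \<noteq> {} \<and> \<Union>H \<subseteq> A \<union> B \<and> (\<forall>v. degree H v \<le> D) \<and> D * card (\<Union>H) \<le> 6 * card H"
    using \<open>finite A\<close> \<open>finite B\<close> AB(2-4) \<open>0 < D\<close> by (intro bipartite_exists_bounded_degree_dense_subgraph)
  then obtain H where H: "H \<subseteq> E" "H \<noteq> {}" "\<Union>H \<subseteq> A \<union> B" "\<forall>v. degree H v \<le> D"
    "D * card (\<Union>H) \<le> 6 * card H"
    by blast
  have "\<Union>H \<subseteq> V"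
    using H(3) AB(1) by (rule order_trans)
  then have "finite (\<Union>H)"
    using \<open>finite V\<close> by (rule finite_subset)
  moreover have "\<forall>e\<in>H. e \<noteq> {}"
    using H(1) edges by fastforce
  ultimately have "\<exists>W\<subseteq>\<Union>H. W \<noteq> {} \<and>
      (\<forall>v\<in>W. real D / 6 \<le> degree {e\<in>H. e \<subseteq> W} v \<and> degree {e\<in>H. e \<subseteq> W} v \<le> D)"
    using H(2,4,5) by (intro exists_induced_subgraph_degrees_between)
  then obtain W where "W \<subseteq> \<Union>H" "W \<noteq> {}"
    "\<forall>v\<in>W. real D / 6 \<le> degree {e\<in>H. e \<subseteq> W} v \<and> degree {e\<in>H. e \<subseteq> W} v \<le> D"
    by blast
  moreover have "subgraph W {e\<in>H. e \<subseteq> W} V E"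
    unfolding subgraph_def using \<open>W \<subseteq> \<Union>H\<close> \<open>\<Union>H \<subseteq> V\<close> H(1) by blast
  ultimately show ?thesis
    by blast
qed

lemma ceiling_log2_bounds:
  assumes "2 \<le> n"
  shows "1 \<le> \<lceil>log 2 (real n)\<rceil>" "n \<le> 2 ^ nat \<lceil>log 2 (real n)\<rceil>"
proof -
  show "1 \<le> \<lceil>log 2 (real n)\<rceil>"
    using assms by simp
  have "real n = 2 powr log 2 (real n)"
    using assms by simp
  also have "\<dots> \<le> 2 powr real (nat \<lceil>log 2 (real n)\<rceil>)"
    by (intro powr_mono) linarith+
  also have "\<dots> = 2 ^ nat \<lceil>log 2 (real n)\<rceil>"
    by (simp add: powr_realpow)
  finally show "n \<le> 2 ^ nat \<lceil>log 2 (real n)\<rceil>"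
    by (metis of_nat_le_iff of_nat_numeral of_nat_power)
qed

lemma floor_quotient_bounds:
  fixes x k :: real
  assumes "1 \<le> k" "0 \<le> x"
  shows "real (nat (\<lfloor>(x - 1) / k\<rfloor> + 1)) = real_of_int (\<lfloor>(x - 1) / k\<rfloor> + 1)"
    and "k * (real (nat (\<lfloor>(x - 1) / k\<rfloor> + 1)) - 1) + 1 \<le> x"
proof -
  have "-1 \<le> (x - 1) / k"
    using assms by (simp add: le_divide_eq)
  then show eq: "real (nat (\<lfloor>(x - 1) / k\<rfloor> + 1)) = real_of_int (\<lfloor>(x - 1) / k\<rfloor> + 1)"
    by linarith
  have "real_of_int \<lfloor>(x - 1) / k\<rfloor> \<le> (x - 1) / k"
    by (rule of_int_floor_le)
  then show "k * (real (nat (\<lfloor>(x - 1) / k\<rfloor> + 1)) - 1) + 1 \<le> x"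
    unfolding eq using assms(1) by (simp add: le_divide_eq mult.commute)
qed

theorem lemma2p1:
  fixes V :: "'a set" and E :: "'a set set" and n :: nat and d d' :: real
  assumes "simple_graph V E"
    and "n = card V" and "n \<ge> 2"
    and "d = avg_degree V E"
    and "d' = (real_of_int \<lfloor>(d / 4 - 1) / real_of_int \<lceil>log 2 (real n)\<rceil>\<rfloor> + 1) / 6"
  shows "\<exists>V' E'. V' \<noteq> {} \<and> subgraph V' E' V E \<and>
           (\<forall>v\<in>V'. d' \<le> real (degree E' v) \<and> real (degree E' v) \<le> 6 * d')"
proof -
  define k where "k = nat \<lceil>log 2 (real n)\<rceil>"
  define D where "D = nat (\<lfloor>(d / 4 - 1) / real k\<rfloor> + 1)"
  have "1 \<le> real k" "real k = \<lceil>log 2 (real n)\<rceil>" "card V \<le> 2 ^ k"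
    using ceiling_log2_bounds[OF assms(3)] assms(2) unfolding k_def by auto
  moreover have "0 \<le> d / 4"
    using assms(4) by (simp add: avg_degree_def)
  ultimately have d': "d' = real D / 6" and dense: "real k * (real D - 1) + 1 \<le> avg_degree V E / 4"
    using floor_quotient_bounds[of "real k" "d / 4"] assms(4,5) unfolding D_def by simp_all
  show ?thesis
  proof (cases "D = 0")
    case True
    obtain v where "v \<in> V"
      using assms(2,3) by fastforce
    then show ?thesis
      using True d' by (intro exI[of _ "{v}"] exI[of _ "{}"]) (auto simp: subgraph_def degree_def)
  next
    case False
    from exists_subgraph_degrees_between[OF assms(1) \<open>card V \<le> 2 ^ k\<close> _ dense] False
    show ?thesis
      unfolding d' by simp
  qed
qed

end
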